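(* Let $u_1,\dots,u_m\in\mathbf{B}^d\subset\mathbb{R}^d$ and positive weights $c_1,\dots,c_m$ satisfy \[ \sum_{i=1}^m c_i\, u_i\otimes u_i=\mathrm{Id}_d\quad\text{and}\quad \sum_{i=1}^m c_i u_i=0. \] Let $K$ be the convex hull of $u_1,\dots,u_m$. Then $\mathbf{B}^d\subset\big(\sum_{i=1}^m c_i\big)\cdot K$.
   Context: $\mathbf{B}^d$ is the closed Euclidean unit ball in $\mathbb{R}^d$; $u\otimes u$ denotes the linear map $x\mapsto\langle u,x\rangle u$; $\mathrm{Id}_d$ is the identity on $\mathbb{R}^d$. *)

theory Defs
  imports "HOL-Analysis.Analysis"
begin

end

theory Submission
  imports Defs
begin

text \<open>Let \<open>C = \<Sum>i. c\<^sub>i\<close> and \<open>K = conv{u\<^sub>i}\<close>. It suffices to show \<open>\<parallel>v\<parallel> \<le> C h\<^sub>K(v)\<close> for the support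
  function \<open>h\<^sub>K\<close>, since then every closed half-space containing \<open>K\<close> contains \<open>B/C\<close>.
  If \<open>v \<bullet> u\<^sub>i \<le> s\<close> for all \<open>i\<close>, then \<open>v \<bullet> u\<^sub>i \<in> [-\<parallel>v\<parallel>, s]\<close> because \<open>\<parallel>u\<^sub>i\<parallel> \<le> 1\<close>, so
  \<open>(s - v \<bullet> u\<^sub>i)(v \<bullet> u\<^sub>i + \<parallel>v\<parallel>) \<ge> 0\<close>. Summing with weights \<open>c\<^sub>i\<close>, the isotropy condition turns
  \<open>\<Sum> c\<^sub>i (v \<bullet> u\<^sub>i)\<^sup>2\<close> into \<open>\<parallel>v\<parallel>\<^sup>2\<close> and the centring condition kills \<open>\<Sum> c\<^sub>i (v \<bullet> u\<^sub>i)\<close>,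
  leaving \<open>\<parallel>v\<parallel>\<^sup>2 \<le> s \<parallel>v\<parallel> C\<close>.\<close>

lemma mem_convex_hull_if_halfspaces:
  fixes z :: "'a::euclidean_space"
  assumes "finite S"
    and "\<And>a b. S \<subseteq> {x. a \<bullet> x \<le> b} \<Longrightarrow> a \<bullet> z \<le> b"
  shows "z \<in> convex hull S"
proof -
  have "closed (convex hull S)"
    using \<open>finite S\<close> by (simp add: compact_imp_closed finite_imp_compact_convex_hull)
  note halfspaces = convex_halfspace_intersection[OF this convex_convex_hull]
  have "z \<in> \<Inter>{h. convex hull S \<subseteq> h \<and> (\<exists>a b. h = {x. a \<bullet> x \<le> b})}"
  proof (rule InterI)
    fix h assume "h \<in> {h. convex hull S \<subseteq> h \<and> (\<exists>a b. h = {x. a \<bullet> x \<le> b})}"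
    then obtain a b where hull: "convex hull S \<subseteq> {x. a \<bullet> x \<le> b}" and h: "h = {x. a \<bullet> x \<le> b}"
      by blast
    have "S \<subseteq> {x. a \<bullet> x \<le> b}"
      using hull_subset hull by (rule order_trans)
    then show "z \<in> h"
      using assms(2) h by simp
  qed
  then show ?thesis
    by (simp only: halfspaces[symmetric])
qed

lemma isotropic_index_set_nonempty:
  fixes u :: "'i \<Rightarrow> 'a::euclidean_space"
  assumes "\<And>x. (\<Sum>i\<in>I. c i *\<^sub>R ((u i \<bullet> x) *\<^sub>R u i)) = x"
  shows "I \<noteq> {}"
proof
  assume "I = {}"
  obtain x :: 'a where "norm x = 1"
    using vector_choose_size zero_le_one by blast
  with assms[of x] \<open>I = {}\<close> show False by simp
qed

lemma isotropic_sum_inner_square: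
  fixes u :: "'i \<Rightarrow> 'a::euclidean_space"
  assumes "\<And>x. (\<Sum>i\<in>I. c i *\<^sub>R ((u i \<bullet> x) *\<^sub>R u i)) = x"
  shows "(\<Sum>i\<in>I. c i * (v \<bullet> u i)\<^sup>2) = (norm v)\<^sup>2"
proof -
  have "(norm v)\<^sup>2 = v \<bullet> (\<Sum>i\<in>I. c i *\<^sub>R ((u i \<bullet> v) *\<^sub>R u i))"
    using assms by (simp add: power2_norm_eq_inner)
  also have "\<dots> = (\<Sum>i\<in>I. c i * (v \<bullet> u i)\<^sup>2)"
    by (simp add: inner_sum_right inner_commute power2_eq_square mult.assoc)
  finally show ?thesis by simp
qed

lemma isotropic_centred_norm_le_support:
  fixes u :: "'i \<Rightarrow> 'a::euclidean_space"
  assumes norm_u: "\<And>i. i \<in> I \<Longrightarrow> norm (u i) \<le> 1"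
    and c_nonneg: "\<And>i. i \<in> I \<Longrightarrow> c i \<ge> 0"
    and isotropic: "\<And>x. (\<Sum>i\<in>I. c i *\<^sub>R ((u i \<bullet> x) *\<^sub>R u i)) = x"
    and centred: "(\<Sum>i\<in>I. c i *\<^sub>R u i) = 0"
    and support: "\<And>i. i \<in> I \<Longrightarrow> v \<bullet> u i \<le> s"
  shows "norm v \<le> sum c I * s"
proof -
  have factors: "0 \<le> (s - v \<bullet> u i) * (v \<bullet> u i + norm v)" if "i \<in> I" for i
  proof -
    have "\<bar>v \<bullet> u i\<bar> \<le> norm v"
      using Cauchy_Schwarz_ineq2[of v "u i"] norm_u[OF that]
      by (meson mult_left_le norm_ge_zero order_trans)
    with support[OF that] show ?thesis by simp
  qed
  have "(norm v)\<^sup>2 = (\<Sum>i\<in>I. c i * (v \<bullet> u i)\<^sup>2)"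
    using isotropic_sum_inner_square[OF isotropic] by simp
  also have "\<dots> \<le> (\<Sum>i\<in>I. c i * ((s - norm v) * (v \<bullet> u i) + s * norm v))"
    using factors c_nonneg
    by (intro sum_mono mult_left_mono) (auto simp: algebra_simps power2_eq_square)
  also have "\<dots> = (s - norm v) * (v \<bullet> (\<Sum>i\<in>I. c i *\<^sub>R u i)) + s * norm v * sum c I"
    by (simp add: algebra_simps sum.distrib sum_subtractf sum_distrib_left inner_sum_right)
  also have "\<dots> = norm v * (sum c I * s)"
    using centred by simp
  finally have "norm v * norm v \<le> norm v * (sum c I * s)"
    by (simp add: power2_eq_square)
  moreover have "0 \<le> sum c I * s" if "v = 0"
  proof -
    obtain i where "i \<in> I"
      using isotropic_index_set_nonempty[OF isotropic] by blast
    then show ?thesis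
      using support c_nonneg \<open>v = 0\<close> by (simp add: sum_nonneg)
  qed
  ultimately show ?thesis
    by (cases "v = 0") auto
qed

theorem lemma4p1:
  fixes u :: "nat \<Rightarrow> 'a::euclidean_space" and c :: "nat \<Rightarrow> real" and m :: nat
  assumes "\<And>i. i \<in> {1..m} \<Longrightarrow> u i \<in> cball 0 1"
    and "\<And>i. i \<in> {1..m} \<Longrightarrow> c i > 0"
    and "\<And>x. (\<Sum>i=1..m. c i *\<^sub>R ((u i \<bullet> x) *\<^sub>R u i)) = x"
    and "(\<Sum>i=1..m. c i *\<^sub>R u i) = 0"
  shows "cball (0::'a) 1 \<subseteq> (\<lambda>y. (\<Sum>i=1..m. c i) *\<^sub>R y) ` (convex hull (u ` {1..m}))"
proof
  fix x :: 'a assume x: "x \<in> cball 0 1"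
  define C where "C = (\<Sum>i=1..m. c i)"
  have "C > 0"
    unfolding C_def using assms(2) isotropic_index_set_nonempty[OF assms(3)]
    by (intro sum_pos) auto
  have "(1 / C) *\<^sub>R x \<in> convex hull (u ` {1..m})"
  proof (rule mem_convex_hull_if_halfspaces)
    fix a b assume "u ` {1..m} \<subseteq> {y. a \<bullet> y \<le> b}"
    then have "norm a \<le> C * b"
      unfolding C_def using assms
      by (intro isotropic_centred_norm_le_support) (auto simp: less_imp_le image_subset_iff)
    moreover have "a \<bullet> x \<le> norm a"
      using x norm_cauchy_schwarz[of a x] mult_left_le[of "norm x" "norm a"] by simp
    ultimately show "a \<bullet> ((1 / C) *\<^sub>R x) \<le> b"
      using \<open>C > 0\<close> by (simp add: field_simps)
  qed simp
  moreover have "x = C *\<^sub>R ((1 / C) *\<^sub>R x)"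
    using \<open>C > 0\<close> by simp
  ultimately show "x \<in> (\<lambda>y. (\<Sum>i=1..m. c i) *\<^sub>R y) ` (convex hull (u ` {1..m}))"
    unfolding C_def by (rule rev_image_eqI)
qed

end
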